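(* Let $\rho_T$ and $\rho_A$ be density matrices on $\mathbb{C}^2$ with eigenvalues, sorted in decreasing order, $\{\alpha, 1-\alpha\}$ and $\{\beta, 1-\beta\}$ respectively (so $\alpha,\beta \ge 1/2$). Let $U$ be any unitary on $\mathbb{C}^2\otimes\mathbb{C}^2$, and let $\rho_T^{out} = \mathrm{Tr}_A\!\left(U(\rho_T\otimes\rho_A)U^\dagger\right)$ have eigenvalues, sorted in decreasing order, $\{\alpha^{out}, 1-\alpha^{out}\}$. Then $$\alpha^{out} \le \max(\alpha,\beta).$$
   Context: $\mathrm{Tr}_A$ denotes the partial trace over the second (auxiliary) tensor factor; the first factor is the target qubit. *)

theory Defs
  imports "HOL-Analysis.Analysis"
begin

text \<open>Qubit operators are 2x2 complex matrices indexed by the type 2;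
  operators on C^2 (x) C^2 are indexed by pairs (target index, auxiliary index).\<close>

type_synonym qmat = "complex ^ 2 ^ 2"
type_synonym qmat2 = "complex ^ (2 \<times> 2) ^ (2 \<times> 2)"

definition adjoint_mat :: "complex ^ 'n ^ 'n \<Rightarrow> complex ^ 'n ^ 'n" where
  "adjoint_mat M = (\<chi> i j. cnj (M $ j $ i))"

definition hermitian_mat :: "complex ^ 'n ^ 'n \<Rightarrow> bool" where
  "hermitian_mat M \<longleftrightarrow> adjoint_mat M = M"

definition psd_mat :: "complex ^ 'n ^ 'n \<Rightarrow> bool" where
  "psd_mat M \<longleftrightarrow> (\<forall>x :: complex ^ 'n.
     Im (\<Sum>i\<in>UNIV. cnj (x $ i) * (M *v x) $ i) = 0 \<and>
     Re (\<Sum>i\<in>UNIV. cnj (x $ i) * (M *v x) $ i) \<ge> 0)"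

definition trace_mat :: "complex ^ 'n ^ 'n \<Rightarrow> complex" where
  "trace_mat M = (\<Sum>i\<in>UNIV. M $ i $ i)"

definition density_mat :: "complex ^ 'n ^ 'n \<Rightarrow> bool" where
  "density_mat M \<longleftrightarrow> hermitian_mat M \<and> psd_mat M \<and> trace_mat M = 1"

definition unitary_mat :: "complex ^ 'n ^ 'n \<Rightarrow> bool" where
  "unitary_mat U \<longleftrightarrow> U ** adjoint_mat U = mat 1 \<and> adjoint_mat U ** U = mat 1"

definition eigenvalues_mat :: "complex ^ 'n ^ 'n \<Rightarrow> complex set" where
  "eigenvalues_mat M = {c. \<exists>v. v \<noteq> 0 \<and> M *v v = c *s v}"

definition tensor_mat :: "complex ^ 'n ^ 'n \<Rightarrow> complex ^ 'm ^ 'm \<Rightarrow> complex ^ ('n \<times> 'm) ^ ('n \<times> 'm)" where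
  "tensor_mat A B = (\<chi> p q. A $ fst p $ fst q * B $ snd p $ snd q)"

definition ptrace_A :: "complex ^ ('n::finite \<times> 'm::finite) ^ ('n \<times> 'm) \<Rightarrow> complex ^ 'n ^ 'n" where
  "ptrace_A M = (\<chi> i j. \<Sum>k\<in>UNIV. M $ (i, k) $ (j, k))"

end

theory Submission
  imports Defs
begin

(* Write rho_T = alpha P_1 + (1 - alpha) P_2 and rho_A = beta Q_1 + (1 - beta) Q_2 in orthonormal
   eigenbases.  Then M = U (rho_T (x) rho_A) U^dagger has an orthonormal eigenbasis g_ij with
   eigenvalues alpha beta, alpha (1 - beta), (1 - alpha) beta, (1 - alpha)(1 - beta).  For an
   eigenvector x of Tr_A M with eigenvalue alpha_out,
     alpha_out |x|^2 = <x, Tr_A(M) x> = sum_ij lambda_ij c_ij,   c_ij = <x, Tr_A(|g_ij><g_ij|) x>,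
   where 0 <= c_ij <= |x|^2 and sum_ij c_ij = 2 |x|^2, because x x^dagger (x) I is |x|^2 times a
   rank-two projection.  Such a weighted sum is at most |x|^2 times the sum of the two largest
   eigenvalues (Ky Fan), which is alpha beta + max (alpha (1 - beta), (1 - alpha) beta)
   = max alpha beta. *)

section \<open>Complex inner product and rank-one matrices\<close>

definition cinner :: "complex ^ 'n \<Rightarrow> complex ^ 'n \<Rightarrow> complex" where
  "cinner x y = (\<Sum>i\<in>UNIV. cnj (x $ i) * y $ i)"

lemma cinner_self: "cinner x x = of_real ((norm x)\<^sup>2)"
proof -
  have "(norm x)\<^sup>2 = (\<Sum>i\<in>UNIV. (cmod (x $ i))\<^sup>2)"
    unfolding norm_vec_def L2_set_def by (simp add: sum_nonneg)
  moreover have "cnj (x $ i) * x $ i = of_real ((cmod (x $ i))\<^sup>2)" for i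
    by (metis complex_norm_square mult.commute)
  ultimately show ?thesis
    unfolding cinner_def by simp
qed

lemma cinner_add_right: "cinner x (y + z) = cinner x y + cinner x z"
  unfolding cinner_def by (simp add: distrib_left sum.distrib)

lemma cinner_scaleR_right: "cinner x (r *\<^sub>R y) = r *\<^sub>R cinner x y"
  unfolding cinner_def by (simp add: scaleR_sum_right)

lemma cinner_scaleR_left: "cinner (r *\<^sub>R x) y = r *\<^sub>R cinner x y"
  unfolding cinner_def by (simp add: scaleR_sum_right)

lemma cinner_scaleC_right: "cinner x (c *s y) = c * cinner x y"
  unfolding cinner_def by (simp add: sum_distrib_left mult_ac)

lemma cinner_commute: "cinner y x = cnj (cinner x y)"
  unfolding cinner_def by (simp add: cnj_sum mult.commute)

lemma cinner_adjoint_mat: "cinner x (M *v y) = cinner (adjoint_mat M *v x) y"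
proof -
  have "cinner x (M *v y) = (\<Sum>i\<in>UNIV. \<Sum>j\<in>UNIV. cnj (x $ i) * M $ i $ j * y $ j)"
    unfolding cinner_def matrix_vector_mult_def by (simp add: sum_distrib_left mult.assoc)
  also have "\<dots> = (\<Sum>j\<in>UNIV. \<Sum>i\<in>UNIV. cnj (x $ i) * M $ i $ j * y $ j)"
    by (rule sum.swap)
  also have "\<dots> = cinner (adjoint_mat M *v x) y"
    unfolding cinner_def matrix_vector_mult_def adjoint_mat_def
    by (simp add: sum_distrib_left sum_distrib_right mult.commute mult.left_commute)
  finally show ?thesis .
qed

lemma cmod_cinner_le: "cmod (cinner x y) \<le> norm x * norm y"
proof -
  have "cmod (cinner x y) \<le> (\<Sum>i\<in>UNIV. \<bar>cmod (x $ i)\<bar> * \<bar>cmod (y $ i)\<bar>)"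
    unfolding cinner_def by (rule order_trans[OF norm_sum]) (simp add: norm_mult)
  also have "\<dots> \<le> norm x * norm y"
    unfolding norm_vec_def by (rule L2_set_mult_ineq)
  finally show ?thesis .
qed

lemma scaleC_of_real: "complex_of_real r *s x = r *\<^sub>R x"
proof -
  have "complex_of_real r * z = r *\<^sub>R z" for z
    by (simp add: scaleR_conv_of_real)
  then show ?thesis
    by (simp add: vec_eq_iff)
qed

lemma eigenvalues_mat_of_real:
  "complex_of_real c \<in> eigenvalues_mat M \<longleftrightarrow> (\<exists>x. x \<noteq> 0 \<and> M *v x = c *\<^sub>R x)"
  by (simp add: eigenvalues_mat_def scaleC_of_real)

lemma matrix_vector_mult_scaleR: "A *v (r *\<^sub>R x) = r *\<^sub>R (A *v x :: complex ^ 'n)"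
  unfolding matrix_vector_mult_def by (simp add: vec_eq_iff scaleR_sum_right)

lemma scaleR_matrix_vector_mult: "(r *\<^sub>R A) *v x = r *\<^sub>R (A *v x :: complex ^ 'n)"
  unfolding matrix_vector_mult_def by (simp add: vec_eq_iff scaleR_sum_right)

lemma mat_matrix_vector_mult: "mat c *v x = c *s x"
  unfolding vec_eq_iff
proof
  fix i
  have "(\<Sum>j\<in>UNIV. (if i = j then c else 0) * x $ j) = (\<Sum>j\<in>UNIV. if i = j then c * x $ j else 0)"
    by (rule sum.cong) auto
  then show "(mat c *v x) $ i = (c *s x) $ i"
    unfolding matrix_vector_mult_def mat_def by simp
qed

lemma norm_unitary_mat:
  assumes "unitary_mat U"
  shows "norm (U *v x) = norm x"
proof -
  have "cinner (U *v x) (U *v x) = cinner x x"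
    using assms unfolding unitary_mat_def
    by (simp add: cinner_adjoint_mat[of "U *v x"] matrix_vector_mul_assoc)
  then have "(norm (U *v x))\<^sup>2 = (norm x)\<^sup>2"
    by (metis cinner_self of_real_eq_iff)
  then show ?thesis
    by (simp add: power2_eq_iff_nonneg)
qed

lemma psd_mat_eigenvalue_nonneg:
  assumes "psd_mat M" and "complex_of_real c \<in> eigenvalues_mat M"
  shows "0 \<le> c"
proof -
  obtain x where "x \<noteq> 0" and x: "M *v x = c *\<^sub>R x"
    using assms(2) eigenvalues_mat_of_real by blast
  have "0 \<le> Re (cinner x (M *v x))"
    using assms(1) unfolding psd_mat_def cinner_def by simp
  also have "\<dots> = c * (norm x)\<^sup>2"
    unfolding x cinner_scaleR_right cinner_self by simp
  finally show ?thesis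
    using \<open>x \<noteq> 0\<close> by (simp add: zero_le_mult_iff)
qed

definition outer_mat :: "complex ^ 'n \<Rightarrow> complex ^ 'n \<Rightarrow> complex ^ 'n ^ 'n" where
  "outer_mat x y = (\<chi> i j. x $ i * cnj (y $ j))"

lemma outer_mat_scaleR_left: "outer_mat (r *\<^sub>R x) y = r *\<^sub>R outer_mat x y"
  unfolding outer_mat_def by (simp add: vec_eq_iff)

lemma outer_mat_matrix_vector_mult: "outer_mat x y *v z = cinner y z *s x"
  unfolding outer_mat_def matrix_vector_mult_def cinner_def
  by (simp add: vec_eq_iff sum_distrib_left mult_ac)

lemma cinner_outer_mat: "cinner x (outer_mat y z *v w) = cinner x y * cinner z w"
  by (simp add: outer_mat_matrix_vector_mult cinner_scaleC_right mult.commute)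

lemma matrix_mul_outer_mat_left: "A ** outer_mat x y = outer_mat (A *v x) y"
  unfolding outer_mat_def matrix_matrix_mult_def matrix_vector_mult_def
  by (simp add: vec_eq_iff sum_distrib_left sum_distrib_right mult_ac)

lemma matrix_mul_outer_mat:
  "A ** outer_mat x y ** adjoint_mat B = outer_mat (A *v x) (B *v y)"
  unfolding outer_mat_def matrix_matrix_mult_def matrix_vector_mult_def adjoint_mat_def
  by (simp add: vec_eq_iff sum_distrib_left sum_distrib_right cnj_sum mult_ac)

lemma trace_outer_mat: "trace_mat (outer_mat x y) = cinner y x"
  unfolding trace_mat_def outer_mat_def cinner_def by (simp add: mult.commute)

lemma trace_mat_add: "trace_mat (A + B) = trace_mat A + trace_mat B"
  unfolding trace_mat_def by (simp add: sum.distrib)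

lemma outer_mat_resolution:
  assumes "outer_mat v v + outer_mat u u = mat 1"
  shows "A = outer_mat (A *v v) v + outer_mat (A *v u) u"
    and "x = cinner v x *s v + cinner u x *s u"
proof -
  have "A = A ** (outer_mat v v + outer_mat u u)" and "x = (outer_mat v v + outer_mat u u) *v x"
    using assms by simp_all
  then show "A = outer_mat (A *v v) v + outer_mat (A *v u) u"
    and "x = cinner v x *s v + cinner u x *s u"
    by (simp_all only: matrix_add_ldistrib matrix_mul_outer_mat_left
        matrix_vector_mult_add_rdistrib outer_mat_matrix_vector_mult)
qed

section \<open>Tensor products and spectral decompositions\<close>

definition tensor_vec :: "complex ^ 'n \<Rightarrow> complex ^ 'm \<Rightarrow> complex ^ ('n \<times> 'm)" where
  "tensor_vec x y = (\<chi> p. x $ fst p * y $ snd p)"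

lemma cinner_tensor_vec:
  "cinner (tensor_vec x y) (tensor_vec x' y') = cinner x x' * cinner y y'"
proof -
  have "cinner (tensor_vec x y) (tensor_vec x' y')
      = (\<Sum>i\<in>UNIV. \<Sum>j\<in>UNIV. (cnj (x $ i) * x' $ i) * (cnj (y $ j) * y' $ j))"
    unfolding cinner_def tensor_vec_def UNIV_Times_UNIV[symmetric] sum.cartesian_product'
    by (simp add: mult_ac)
  then show ?thesis
    unfolding cinner_def by (simp add: sum_product)
qed

lemma norm_tensor_vec: "norm (tensor_vec x y) = norm x * norm y"
proof -
  have "of_real ((norm (tensor_vec x y))\<^sup>2) = (of_real ((norm x * norm y)\<^sup>2) :: complex)"
    using cinner_tensor_vec[of x y x y] by (simp only: cinner_self power_mult_distrib of_real_mult)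
  then have "(norm (tensor_vec x y))\<^sup>2 = (norm x * norm y)\<^sup>2"
    by (simp only: of_real_eq_iff)
  then show ?thesis
    by (simp add: power2_eq_iff_nonneg)
qed

lemma tensor_mat_outer_mat:
  "tensor_mat (outer_mat x x') (outer_mat y y') = outer_mat (tensor_vec x y) (tensor_vec x' y')"
  unfolding tensor_mat_def outer_mat_def tensor_vec_def by (simp add: vec_eq_iff mult_ac)

lemma tensor_mat_mat: "tensor_mat (mat a) (mat b) = mat (a * b)"
  unfolding tensor_mat_def mat_def by (simp add: vec_eq_iff prod_eq_iff)

lemma bilinear_tensor_mat: "bilinear tensor_mat"
  unfolding bilinear_def
  by (auto intro!: linearI simp: tensor_mat_def vec_eq_iff distrib_left distrib_right)

lemma tensor_mat_scaleR: "tensor_mat (r *\<^sub>R A) (s *\<^sub>R B) = (r * s) *\<^sub>R tensor_mat A B"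
  unfolding tensor_mat_def by (simp add: vec_eq_iff)

text \<open>Unit vectors that resolve the identity are automatically orthonormal, so this is an
  orthonormal eigenbasis of \<open>M\<close> with eigenvalues \<open>ev\<close>.\<close>

definition spectral_decomp ::
    "('i::finite \<Rightarrow> real) \<Rightarrow> ('i \<Rightarrow> complex ^ 'n) \<Rightarrow> complex ^ 'n ^ 'n \<Rightarrow> bool" where
  "spectral_decomp ev u M \<longleftrightarrow>
     (\<forall>i. norm (u i) = 1) \<and> (\<Sum>i\<in>UNIV. outer_mat (u i) (u i)) = mat 1 \<and>
     M = (\<Sum>i\<in>UNIV. ev i *\<^sub>R outer_mat (u i) (u i))"

lemma spectral_decomp_tensor_mat:
  assumes "spectral_decomp ev u A" and "spectral_decomp ev' v B"
  shows "spectral_decomp (\<lambda>p. ev (fst p) * ev' (snd p)) (\<lambda>p. tensor_vec (u (fst p)) (v (snd p)))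
           (tensor_mat A B)"
proof -
  have sum_tensor: "tensor_mat (\<Sum>i\<in>UNIV. f i) (\<Sum>j\<in>UNIV. g j)
      = (\<Sum>p\<in>UNIV. tensor_mat (f (fst p)) (g (snd p)))"
    for f :: "_ \<Rightarrow> complex ^ 'n ^ 'n" and g :: "_ \<Rightarrow> complex ^ 'm ^ 'm"
    using bilinear_sum[OF bilinear_tensor_mat, of f UNIV g UNIV]
    by (simp add: split_def UNIV_Times_UNIV)
  have "(\<Sum>p\<in>UNIV. outer_mat (tensor_vec (u (fst p)) (v (snd p))) (tensor_vec (u (fst p)) (v (snd p))))
      = tensor_mat (\<Sum>i\<in>UNIV. outer_mat (u i) (u i)) (\<Sum>j\<in>UNIV. outer_mat (v j) (v j))"
    by (simp add: sum_tensor tensor_mat_outer_mat)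
  also have "\<dots> = mat 1"
    using assms by (simp add: spectral_decomp_def tensor_mat_mat)
  finally show ?thesis
    using assms unfolding spectral_decomp_def
    by (simp add: norm_tensor_vec sum_tensor tensor_mat_scaleR tensor_mat_outer_mat)
qed

lemma spectral_decomp_unitary:
  fixes U M :: "complex ^ 'n ^ 'n"
  assumes "unitary_mat U" and "spectral_decomp ev u M"
  shows "spectral_decomp ev (\<lambda>i. U *v u i) (U ** M ** adjoint_mat U)"
proof -
  have "(A + B) ** C = A ** C + B ** C" for A B C :: "complex ^ 'n ^ 'n"
    by (simp add: matrix_matrix_mult_def vec_eq_iff sum.distrib distrib_right)
  then have lin: "linear (\<lambda>N. U ** N ** adjoint_mat U)"
    by (intro linearI) (simp_all add: matrix_add_ldistrib matrix_scalar_ac scalar_matrix_assoc)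
  have "(\<Sum>i\<in>UNIV. outer_mat (U *v u i) (U *v u i))
      = U ** (\<Sum>i\<in>UNIV. outer_mat (u i) (u i)) ** adjoint_mat U"
    by (simp add: linear_sum[OF lin] matrix_mul_outer_mat)
  also have "\<dots> = mat 1"
    using assms unfolding unitary_mat_def spectral_decomp_def by simp
  finally show ?thesis
    using assms unfolding spectral_decomp_def
    by (simp add: norm_unitary_mat linear_sum[OF lin] linear_scale[OF lin]
        matrix_mul_outer_mat)
qed

section \<open>Ky Fan bound for the partial trace\<close>

lemma sum_mult_le_top_weights:
  fixes w c :: "'i \<Rightarrow> real"
  assumes "finite I" and "K \<subseteq> I"
    and c_nonneg: "\<forall>i\<in>I. 0 \<le> c i" and c_le: "\<forall>i\<in>K. c i \<le> n"
    and c_sum: "(\<Sum>i\<in>I. c i) = real (card K) * n"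
    and w_top: "\<forall>i\<in>K. \<forall>j\<in>I - K. w j \<le> w i"
  shows "(\<Sum>i\<in>I. w i * c i) \<le> (\<Sum>i\<in>K. w i) * n"
proof (cases "K = {}")
  case True
  then have "\<forall>i\<in>I. c i = 0"
    using c_sum c_nonneg \<open>finite I\<close> by (simp add: sum_nonneg_eq_0_iff)
  then show ?thesis
    using True by simp
next
  case False
  have "finite K"
    using assms(1,2) finite_subset by blast
  define t where "t = Min (w ` K)"
  \<comment> \<open>The difference of the two sides is
    \<open>(\<Sum>i\<in>K. (w i - t) * (c i - n)) + (\<Sum>j\<in>I - K. (w j - t) * c j) + t * ((\<Sum>i\<in>I. c i) - card K * n)\<close>,
    a sum of nonpositive terms.\<close>
  have t_le: "t \<le> w i" if "i \<in> K" for i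
    using \<open>finite K\<close> that unfolding t_def by simp
  have le_t: "w j \<le> t" if "j \<in> I - K" for j
    using Min_in[of "w ` K"] \<open>finite K\<close> False w_top that unfolding t_def by auto
  have "(\<Sum>i\<in>K. (w i - t) * (c i - n)) \<le> 0"
    using t_le c_le by (intro sum_nonpos mult_nonneg_nonpos) auto
  moreover have "(\<Sum>j\<in>I - K. (w j - t) * c j) \<le> 0"
    using le_t c_nonneg by (intro sum_nonpos mult_nonpos_nonneg) auto
  moreover have "(\<Sum>i\<in>K. (w i - t) * (c i - n))
      = (\<Sum>i\<in>K. w i * c i) - (\<Sum>i\<in>K. w i) * n - t * (\<Sum>i\<in>K. c i) + t * real (card K) * n"
    by (simp add: algebra_simps sum.distrib sum_subtractf sum_distrib_left sum_distrib_right)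
  moreover have "(\<Sum>j\<in>I - K. (w j - t) * c j) = (\<Sum>j\<in>I - K. w j * c j) - t * (\<Sum>j\<in>I - K. c j)"
    by (simp add: algebra_simps sum_subtractf sum_distrib_left)
  moreover have split: "(\<Sum>i\<in>I. f i) = (\<Sum>i\<in>I - K. f i) + (\<Sum>i\<in>K. f i)" for f :: "'i \<Rightarrow> real"
    by (rule sum.subset_diff[OF assms(2,1)])
  moreover have "t * (\<Sum>i\<in>I - K. c i) + t * (\<Sum>i\<in>K. c i) = t * real (card K) * n"
    using c_sum by (simp add: split[of c] flip: distrib_left)
  ultimately show ?thesis
    using split[of "\<lambda>i. w i * c i"] by linarith
qed

lemma linear_ptrace_A: "linear ptrace_A"
  by (rule linearI) (simp_all add: ptrace_A_def vec_eq_iff sum.distrib scaleR_sum_right)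

lemma linear_cinner_mat: "linear (\<lambda>M. cinner x (M *v y))"
  by (rule linearI)
    (simp_all add: matrix_vector_mult_add_rdistrib cinner_add_right cinner_scaleR_right
      scaleR_matrix_vector_mult)

definition slice_vec :: "complex ^ ('n::finite \<times> 'm::finite) \<Rightarrow> 'm \<Rightarrow> complex ^ 'n" where
  "slice_vec x k = (\<chi> i. x $ (i, k))"

lemma ptrace_A_outer_mat:
  "ptrace_A (outer_mat x y) = (\<Sum>k\<in>UNIV. outer_mat (slice_vec x k) (slice_vec y k))"
  unfolding ptrace_A_def outer_mat_def slice_vec_def by (simp add: vec_eq_iff sum_component)

lemma ptrace_A_mat:
  "ptrace_A (mat a :: complex ^ ('n::finite \<times> 'm::finite) ^ ('n \<times> 'm)) = mat (of_nat CARD('m) * a)"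
  unfolding ptrace_A_def mat_def by (simp add: vec_eq_iff)

lemma norm_slice_vec: "(norm x)\<^sup>2 = (\<Sum>k\<in>UNIV. (norm (slice_vec x k))\<^sup>2)"
proof -
  have "(norm x)\<^sup>2 = (\<Sum>i\<in>UNIV. \<Sum>k\<in>UNIV. (cmod (x $ (i, k)))\<^sup>2)"
    unfolding norm_vec_def L2_set_def UNIV_Times_UNIV[symmetric] sum.cartesian_product'
    by (simp add: sum_nonneg)
  also have "\<dots> = (\<Sum>k\<in>UNIV. \<Sum>i\<in>UNIV. (cmod (x $ (i, k)))\<^sup>2)"
    by (rule sum.swap)
  also have "\<dots> = (\<Sum>k\<in>UNIV. (norm (slice_vec x k))\<^sup>2)"
    unfolding norm_vec_def L2_set_def slice_vec_def by (simp add: sum_nonneg)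
  finally show ?thesis .
qed

lemma cinner_ptrace_A_outer_mat:
  "Re (cinner x (ptrace_A (outer_mat g g) *v x)) = (\<Sum>k\<in>UNIV. (cmod (cinner (slice_vec g k) x))\<^sup>2)"
proof -
  have "cinner x (ptrace_A (outer_mat g g) *v x)
      = (\<Sum>k\<in>UNIV. cinner x (slice_vec g k) * cinner (slice_vec g k) x)"
    by (simp add: ptrace_A_outer_mat linear_sum[OF linear_cinner_mat] cinner_outer_mat)
  also have "\<dots> = (\<Sum>k\<in>UNIV. of_real ((cmod (cinner (slice_vec g k) x))\<^sup>2))"
    by (intro sum.cong refl) (metis cinner_commute complex_norm_square mult.commute)
  finally show ?thesis
    by simp
qed

lemma cinner_ptrace_A_outer_mat_le:
  "Re (cinner x (ptrace_A (outer_mat g g) *v x)) \<le> (norm g * norm x)\<^sup>2"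
proof -
  have "Re (cinner x (ptrace_A (outer_mat g g) *v x)) \<le> (\<Sum>k\<in>UNIV. (norm (slice_vec g k) * norm x)\<^sup>2)"
    unfolding cinner_ptrace_A_outer_mat
    by (intro sum_mono power_mono cmod_cinner_le) simp
  also have "\<dots> = (norm g * norm x)\<^sup>2"
    by (simp add: norm_slice_vec[of g] power_mult_distrib sum_distrib_right)
  finally show ?thesis .
qed

lemma cinner_ptrace_A_le_top_eigenvalues:
  fixes M :: "complex ^ ('n::finite \<times> 'm::finite) ^ ('n \<times> 'm)" and ev :: "'i::finite \<Rightarrow> real"
  assumes M: "spectral_decomp ev g M"
    and card_K: "card K = CARD('m)" and ev_top: "\<forall>i\<in>K. \<forall>j\<in>-K. ev j \<le> ev i"
  shows "Re (cinner x (ptrace_A M *v x)) \<le> (\<Sum>i\<in>K. ev i) * (norm x)\<^sup>2"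
proof -
  define q where "q N = Re (cinner x (ptrace_A N *v x))" for N :: "complex ^ ('n \<times> 'm) ^ ('n \<times> 'm)"
  have lin: "linear q"
    unfolding q_def
    by (rule linearI)
      (simp_all add: linear_add[OF linear_ptrace_A] linear_scale[OF linear_ptrace_A]
        linear_add[OF linear_cinner_mat] linear_scale[OF linear_cinner_mat])
  define c where "c i = q (outer_mat (g i) (g i))" for i
  have q_M: "q M = (\<Sum>i\<in>UNIV. ev i * c i)"
    using M unfolding spectral_decomp_def c_def by (simp add: linear_sum[OF lin] linear_scale[OF lin])
  have "(\<Sum>i\<in>UNIV. c i) = q (\<Sum>i\<in>UNIV. outer_mat (g i) (g i))"
    unfolding c_def by (simp add: linear_sum[OF lin])
  also have "\<dots> = q (mat 1)"
    using M unfolding spectral_decomp_def by simp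
  also have "\<dots> = real (card K) * (norm x)\<^sup>2"
    unfolding q_def ptrace_A_mat card_K
    by (simp add: mat_matrix_vector_mult cinner_scaleC_right cinner_self)
  finally have c_sum: "(\<Sum>i\<in>UNIV. c i) = real (card K) * (norm x)\<^sup>2" .
  have c_nonneg: "\<forall>i\<in>UNIV. 0 \<le> c i"
    unfolding c_def q_def cinner_ptrace_A_outer_mat by (simp add: sum_nonneg)
  have c_le: "\<forall>i\<in>K. c i \<le> (norm x)\<^sup>2"
  proof
    fix i
    have "c i \<le> (norm (g i) * norm x)\<^sup>2"
      unfolding c_def q_def by (rule cinner_ptrace_A_outer_mat_le)
    then show "c i \<le> (norm x)\<^sup>2"
      using M by (simp add: spectral_decomp_def)
  qed
  have "\<forall>i\<in>K. \<forall>j\<in>UNIV - K. ev j \<le> ev i"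
    using ev_top by (simp add: Compl_eq_Diff_UNIV)
  from sum_mult_le_top_weights[OF finite_class.finite_UNIV subset_UNIV c_nonneg c_le c_sum this]
  show ?thesis
    using q_M unfolding q_def by simp
qed

section \<open>Qubits\<close>

definition qubit_perp :: "complex ^ 2 \<Rightarrow> complex ^ 2" where
  "qubit_perp u = (\<chi> i. if i = 1 then - cnj (u $ 2) else cnj (u $ 1))"

lemma cinner_qubit_perp: "cinner u (qubit_perp u) = 0"
  unfolding cinner_def qubit_perp_def by (simp add: sum_2)

lemma norm_qubit_perp: "norm (qubit_perp u) = norm u"
  unfolding norm_vec_def L2_set_def qubit_perp_def by (simp add: sum_2)

lemma outer_mat_qubit_perp:
  assumes "norm u = 1"
  shows "outer_mat (qubit_perp u) (qubit_perp u) + outer_mat u u = mat 1"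
proof -
  have "cnj (u $ 1) * u $ 1 + cnj (u $ 2) * u $ 2 = 1"
    using cinner_self[of u] assms by (simp add: cinner_def sum_2)
  then show ?thesis
    unfolding outer_mat_def qubit_perp_def mat_def
    by (simp add: vec_eq_iff forall_2 mult.commute)
qed

definition qubit_weights :: "real \<Rightarrow> 2 \<Rightarrow> real" where
  "qubit_weights a j = (if j = 1 then a else 1 - a)"

lemma hermitian_qubit_perp_eigenvector:
  fixes T :: "complex ^ 2 ^ 2"
  assumes herm: "adjoint_mat T = T" and tr: "trace_mat T = 1"
    and "norm u = 1" and Tu: "T *v u = (1 - a) *\<^sub>R u"
  shows "T *v qubit_perp u = a *\<^sub>R qubit_perp u"
proof -
  define v where "v = qubit_perp u"
  have res: "outer_mat v v + outer_mat u u = mat 1"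
    unfolding v_def using \<open>norm u = 1\<close> by (rule outer_mat_qubit_perp)
  \<comment> \<open>By hermiticity \<open>T v\<close> is orthogonal to the eigenvector \<open>u\<close>, hence a multiple of \<open>v\<close>;
    the trace determines the multiple.\<close>
  have "cinner u (T *v v) = 0"
    unfolding cinner_adjoint_mat herm Tu
    by (simp add: cinner_scaleR_left v_def cinner_qubit_perp)
  moreover have "cinner v (T *v v) = complex_of_real a"
  proof -
    have "cinner v (T *v v) + cinner u (T *v u) = 1"
      using tr outer_mat_resolution(1)[OF res, of T] trace_mat_add trace_outer_mat by metis
    moreover have "cinner u (T *v u) = complex_of_real (1 - a)"
      unfolding Tu cinner_scaleR_right cinner_self \<open>norm u = 1\<close> by (simp add: scaleR_conv_of_real)
    ultimately show ?thesis
      by (simp add: algebra_simps)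
  qed
  ultimately show ?thesis
    using outer_mat_resolution(2)[OF res, of "T *v v"] by (simp add: v_def scaleC_of_real)
qed

lemma qubit_spectral_decomp:
  fixes T :: "complex ^ 2 ^ 2"
  assumes "density_mat T" and "complex_of_real (1 - a) \<in> eigenvalues_mat T"
  obtains u where "spectral_decomp (qubit_weights a) u T"
proof -
  have herm: "adjoint_mat T = T" and tr: "trace_mat T = 1"
    using assms(1) unfolding density_mat_def hermitian_mat_def by auto
  obtain x where "x \<noteq> 0" and x: "T *v x = (1 - a) *\<^sub>R x"
    using assms(2) eigenvalues_mat_of_real by blast
  define u where "u = inverse (norm x) *\<^sub>R x"
  define v where "v = qubit_perp u"
  have norm_u: "norm u = 1" and norm_v: "norm v = 1"
    using \<open>x \<noteq> 0\<close> by (simp_all add: u_def v_def norm_qubit_perp)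
  have Tu: "T *v u = (1 - a) *\<^sub>R u"
    unfolding u_def matrix_vector_mult_scaleR x by simp
  have Tv: "T *v v = a *\<^sub>R v"
    unfolding v_def using herm tr norm_u Tu by (rule hermitian_qubit_perp_eigenvector)
  have res: "outer_mat v v + outer_mat u u = mat 1"
    unfolding v_def using norm_u by (rule outer_mat_qubit_perp)
  show ?thesis
  proof
    show "spectral_decomp (qubit_weights a) (\<lambda>j. if j = 1 then v else u) T"
      unfolding spectral_decomp_def qubit_weights_def
      using norm_u norm_v res outer_mat_resolution(1)[OF res, of T]
      by (simp add: sum_2 Tu Tv outer_mat_scaleR_left)
  qed
qed

lemma qubit_weights_top_two:
  fixes a b :: real
  assumes "1/2 \<le> a" "a \<le> 1" "1/2 \<le> b" "b \<le> 1"
  defines "w \<equiv> \<lambda>p::2 \<times> 2. qubit_weights a (fst p) * qubit_weights b (snd p)"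
  obtains K where "card K = 2" and "\<forall>i\<in>K. \<forall>j\<in>-K. w j \<le> w i" and "(\<Sum>i\<in>K. w i) = max a b"
proof -
  have "0 \<le> (2 * a - 1) * b" "0 \<le> (2 * a - 1) * (1 - b)" "0 \<le> a * (2 * b - 1)" "0 \<le> (1 - a) * (2 * b - 1)"
    using assms by simp_all
  then have prods: "(1 - a) * b \<le> a * b" "(1 - a) * (1 - b) \<le> a * (1 - b)"
      "a * (1 - b) \<le> a * b" "(1 - a) * (1 - b) \<le> (1 - a) * b"
    by (simp_all add: algebra_simps)
  show ?thesis
  proof (cases "b \<le> a")
    case True
    have "(1 - a) * b \<le> a * (1 - b)"
      using True by (simp add: algebra_simps)
    with prods show ?thesis
      by (intro that[of "{(1, 1), (1, 2)}"])
        (auto simp: w_def qubit_weights_def split_paired_All forall_2 algebra_simps max_def)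
  next
    case False
    have "a * (1 - b) \<le> (1 - a) * b"
      using False by (simp add: algebra_simps)
    with prods show ?thesis
      by (intro that[of "{(1, 1), (2, 1)}"])
        (auto simp: w_def qubit_weights_def split_paired_All forall_2 algebra_simps max_def)
  qed
qed

theorem theorem1:
  fixes \<rho>T \<rho>A :: "complex ^ 2 ^ 2"
    and U :: "complex ^ (2 \<times> 2) ^ (2 \<times> 2)"
    and \<alpha> \<beta> \<alpha>out :: real
  assumes "density_mat \<rho>T" and "density_mat \<rho>A"
    and "\<alpha> \<ge> 1 - \<alpha>"
    and "eigenvalues_mat \<rho>T = {complex_of_real \<alpha>, complex_of_real (1 - \<alpha>)}"
    and "\<beta> \<ge> 1 - \<beta>"
    and "eigenvalues_mat \<rho>A = {complex_of_real \<beta>, complex_of_real (1 - \<beta>)}"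
    and "unitary_mat U"
    and "\<alpha>out \<ge> 1 - \<alpha>out"
    and "eigenvalues_mat (ptrace_A (U ** tensor_mat \<rho>T \<rho>A ** adjoint_mat U))
           = {complex_of_real \<alpha>out, complex_of_real (1 - \<alpha>out)}"
  shows "\<alpha>out \<le> max \<alpha> \<beta>"
proof -
  define w where "w = (\<lambda>p::2 \<times> 2. qubit_weights \<alpha> (fst p) * qubit_weights \<beta> (snd p))"
  define \<rho>out where "\<rho>out = U ** tensor_mat \<rho>T \<rho>A ** adjoint_mat U"
  have "\<alpha> \<le> 1" and "\<beta> \<le> 1"
    using psd_mat_eigenvalue_nonneg[of \<rho>T "1 - \<alpha>"] psd_mat_eigenvalue_nonneg[of \<rho>A "1 - \<beta>"]
      assms(1,2,4,6) by (simp_all add: density_mat_def)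
  then obtain K where "card K = 2" and top: "\<forall>i\<in>K. \<forall>j\<in>-K. w j \<le> w i"
    and sum_K: "(\<Sum>i\<in>K. w i) = max \<alpha> \<beta>"
    using qubit_weights_top_two[of \<alpha> \<beta>] assms(3,5) unfolding w_def by auto
  obtain u where "spectral_decomp (qubit_weights \<alpha>) u \<rho>T"
    using assms(1,4) by (auto intro: qubit_spectral_decomp)
  moreover obtain v where "spectral_decomp (qubit_weights \<beta>) v \<rho>A"
    using assms(2,6) by (auto intro: qubit_spectral_decomp)
  ultimately have M: "spectral_decomp w (\<lambda>p. U *v tensor_vec (u (fst p)) (v (snd p))) \<rho>out"
    unfolding w_def \<rho>out_def by (intro spectral_decomp_unitary assms(7) spectral_decomp_tensor_mat)
  obtain x where "x \<noteq> 0" and x: "ptrace_A \<rho>out *v x = \<alpha>out *\<^sub>R x"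
    using assms(9) eigenvalues_mat_of_real unfolding \<rho>out_def by blast
  have "\<alpha>out * (norm x)\<^sup>2 = Re (cinner x (ptrace_A \<rho>out *v x))"
    unfolding x cinner_scaleR_right cinner_self by simp
  also have "\<dots> \<le> max \<alpha> \<beta> * (norm x)\<^sup>2"
    using cinner_ptrace_A_le_top_eigenvalues[OF M _ top] \<open>card K = 2\<close> sum_K by simp
  finally show ?thesis
    using \<open>x \<noteq> 0\<close> by simp
qed

end
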